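(* For every $f\in\mathbf{Stp}$, the sets $$U^\Pi_f=\{h\in\mathbb N^{\mathbb N}: h^{[1]}\in[\![h^{[2]}]\!]^\Pi_f\},\qquad U^\Sigma_f=\{h\in\mathbb N^{\mathbb N}: h^{[1]}\in[\![h^{[2]}]\!]^\Sigma_f\}$$ satisfy $U^\Pi_f\in\Pi(\Sigma_{\alpha[f]}\mathcal A)$ and $U^\Sigma_f\in\Sigma(\Pi_{\alpha[f]}\mathcal A)$.
   Context: $\mathbb N=\{1,2,\dots\}$. $B^m_n=\{f\in\mathbb N^{\mathbb N}: f(n)=m\}$. $\mathcal A$ is the family of finite unions of finite intersections of sets of the form $B^m_n$ or $\mathbb N^{\mathbb N}\setminus B^m_n$. $\Pi(\mathcal X)$ (resp. $\Sigma(\mathcal X)$) denotes the family of countable intersections (resp. unions) of members of $\mathcal X$. Transfinitely: $\Pi_0\mathcal A=\Sigma_0\mathcal A=\mathcal A$, $\Pi_{\alpha+1}\mathcal A=\Pi(\Sigma_\alpha\mathcal A)$, $\Sigma_{\alpha+1}\mathcal A=\Sigma(\Pi_\alpha\mathcal A)$, and at limits $\lambda$ the unions over $\alpha<\lambda$. Fix any bijection $\langle\cdot,\cdot\rangle:\mathbb N\times\mathbb N\to\mathbb N\setminus\{1\}$, and put $\langle\,\rangle=1$, $\langle a_1\cdots a_n\rangle=\langle a_1,\langle a_2\cdots a_n\rangle\rangle$ (a bijection from finite tuples onto $\mathbb N$). For $k\in\mathbb N$: $[\![k]\!]^{\mathcal S'}=\mathbb N^{\mathbb N}\setminus B^m_n$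 if $k=\langle1mn\rangle$, $=B^m_n$ if $k=\langle2mn\rangle$, $=\emptyset$ otherwise; for $k=\langle a_1\cdots a_K\rangle$, $[\![k]\!]^{\mathcal S'_\cap}=\bigcap_{i\le K}[\![a_i]\!]^{\mathcal S'}$ (empty intersection $\mathbb N^{\mathbb N}$) and $[\![k]\!]^{\mathcal A}=\bigcup_{i\le K}[\![a_i]\!]^{\mathcal S'_\cap}$ (empty union $\emptyset$). $f^{[n]}(m)=f(\langle n,m\rangle)$. Stumps $\mathbf{Stp}\subseteq\mathbb N^{\mathbb N}$: inductively, $f\in\mathbf{Stp}$ if $f(1)\ne1$, or if $f(1)=1$ and all $f^{[n]}\in\mathbf{Stp}$. Ordinal $\alpha[f]$: $0$ if $f(1)\neq1$, and $\sup_n(\alpha[f^{[n]}]+1)$ if $f(1)=1$. For $f\in\mathbf{Stp}$, $g\in\mathbb N^{\mathbb N}$: if $f(1)\ne1$, $[\![g]\!]^\Pi_f=\bigcap_{n\ge2}[\![g(n)]\!]^{\mathcal A}$, $[\![g]\!]^\Sigma_f=\bigcup_{n\ge2}[\![g(n)]\!]^{\mathcal A}$; if $f(1)=1$, $[\![g]\!]^\Pi_f=\bigcap_n[\![g^{[n]}]\!]^\Sigma_{f^{[n]}}$, $[\![g]\!]^\Sigma_f=\bigcup_n[\![g^{[n]}]\!]^\Pi_{f^{[n]}}$. *)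

theory Defs
  imports Main
begin

(* Baire space N^N with N = {1,2,...}: functions nat => nat, canonically
   normalised by h 0 = 0 (argument 0 is not part of N), with positive values. *)
definition BS :: "(nat \<Rightarrow> nat) set" where
  "BS = {h. h 0 = 0 \<and> (\<forall>n\<ge>1. h n \<ge> 1)}"

definition Bset :: "nat \<Rightarrow> nat \<Rightarrow> (nat \<Rightarrow> nat) set" where
  "Bset m n = {h \<in> BS. h n = m}"

definition lits :: "(nat \<Rightarrow> nat) set set" where
  "lits = {Bset m n | m n. m \<ge> 1 \<and> n \<ge> 1} \<union> {BS - Bset m n | m n. m \<ge> 1 \<and> n \<ge> 1}"

definition Alg :: "(nat \<Rightarrow> nat) set set" where
  "Alg = {\<Union>F | F. finite F \<and> (\<forall>C\<in>F. \<exists>G. finite G \<and> G \<subseteq> lits \<and> C = BS \<inter> \<Inter>G)}"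

definition CountInter :: "(nat \<Rightarrow> nat) set set \<Rightarrow> (nat \<Rightarrow> nat) set set" where
  "CountInter X = {\<Inter>(range S) | S :: nat \<Rightarrow> (nat \<Rightarrow> nat) set. \<forall>i. S i \<in> X}"

definition CountUnion :: "(nat \<Rightarrow> nat) set set \<Rightarrow> (nat \<Rightarrow> nat) set set" where
  "CountUnion X = {\<Union>(range S) | S :: nat \<Rightarrow> (nat \<Rightarrow> nat) set. \<forall>i. S i \<in> X}"

(* countable (Brouwer) ordinal notations; BLim g denotes sup_n g n *)
datatype bord = BZero | BSuc bord | BLim "nat \<Rightarrow> bord"

primrec PiSig :: "bord \<Rightarrow> (nat \<Rightarrow> nat) set set \<times> (nat \<Rightarrow> nat) set set" where
  "PiSig BZero = (Alg, Alg)"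
| "PiSig (BSuc a) = (CountInter (snd (PiSig a)), CountUnion (fst (PiSig a)))"
| "PiSig (BLim g) = ((\<Union>n. fst (PiSig (g n))), (\<Union>n. snd (PiSig (g n))))"

definition PiA :: "bord \<Rightarrow> (nat \<Rightarrow> nat) set set" where "PiA a = fst (PiSig a)"
definition SigA :: "bord \<Rightarrow> (nat \<Rightarrow> nat) set set" where "SigA a = snd (PiSig a)"

definition pairing_bij :: "(nat \<Rightarrow> nat \<Rightarrow> nat) \<Rightarrow> bool" where
  "pairing_bij pr \<longleftrightarrow> bij_betw (\<lambda>(a, b). pr a b) ({1..} \<times> {1..}) {2..}"

primrec tup :: "(nat \<Rightarrow> nat \<Rightarrow> nat) \<Rightarrow> nat list \<Rightarrow> nat" where
  "tup pr [] = 1"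
| "tup pr (a # as) = pr a (tup pr as)"

definition decode :: "(nat \<Rightarrow> nat \<Rightarrow> nat) \<Rightarrow> nat \<Rightarrow> nat list" where
  "decode pr k = (THE as. set as \<subseteq> {1..} \<and> tup pr as = k)"

definition litS :: "(nat \<Rightarrow> nat \<Rightarrow> nat) \<Rightarrow> nat \<Rightarrow> (nat \<Rightarrow> nat) set" where
  "litS pr k = (case decode pr k of
       [a, m, n] \<Rightarrow> (if a = 1 then BS - Bset m n else if a = 2 then Bset m n else {})
     | _ \<Rightarrow> {})"

definition capS :: "(nat \<Rightarrow> nat \<Rightarrow> nat) \<Rightarrow> nat \<Rightarrow> (nat \<Rightarrow> nat) set" where
  "capS pr k = BS \<inter> (\<Inter>a\<in>set (decode pr k). litS pr a)"

definition algS :: "(nat \<Rightarrow> nat \<Rightarrow> nat) \<Rightarrow> nat \<Rightarrow> (nat \<Rightarrow> nat) set" where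
  "algS pr k = (\<Union>a\<in>set (decode pr k). capS pr a)"

definition sect :: "(nat \<Rightarrow> nat \<Rightarrow> nat) \<Rightarrow> (nat \<Rightarrow> nat) \<Rightarrow> nat \<Rightarrow> (nat \<Rightarrow> nat)" where
  "sect pr f n = (\<lambda>m. if m = 0 then 0 else f (pr n m))"

inductive Stp :: "(nat \<Rightarrow> nat \<Rightarrow> nat) \<Rightarrow> (nat \<Rightarrow> nat) \<Rightarrow> bool" for pr where
  "f \<in> BS \<Longrightarrow> f 1 \<noteq> 1 \<Longrightarrow> Stp pr f"
| "f \<in> BS \<Longrightarrow> f 1 = 1 \<Longrightarrow> (\<And>n. n \<ge> 1 \<Longrightarrow> Stp pr (sect pr f n)) \<Longrightarrow> Stp pr f"

(* graph of the ordinal alpha[f]: 0 if f(1) /= 1, sup_n (alpha[f^[n]] + 1) otherwise *)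
inductive stp_ord :: "(nat \<Rightarrow> nat \<Rightarrow> nat) \<Rightarrow> (nat \<Rightarrow> nat) \<Rightarrow> bord \<Rightarrow> bool" for pr where
  "f 1 \<noteq> 1 \<Longrightarrow> stp_ord pr f BZero"
| "f 1 = 1 \<Longrightarrow> (\<And>n. n \<ge> 1 \<Longrightarrow> stp_ord pr (sect pr f n) (g n))
     \<Longrightarrow> stp_ord pr f (BLim (\<lambda>n. BSuc (g (Suc n))))"

definition alpha :: "(nat \<Rightarrow> nat \<Rightarrow> nat) \<Rightarrow> (nat \<Rightarrow> nat) \<Rightarrow> bord" where
  "alpha pr f = (THE a. stp_ord pr f a)"

inductive interp :: "(nat \<Rightarrow> nat \<Rightarrow> nat) \<Rightarrow> (nat \<Rightarrow> nat) \<Rightarrow> (nat \<Rightarrow> nat)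
    \<Rightarrow> (nat \<Rightarrow> nat) set \<Rightarrow> (nat \<Rightarrow> nat) set \<Rightarrow> bool" for pr where
  "f 1 \<noteq> 1 \<Longrightarrow> interp pr f g (\<Inter>n\<in>{2..}. algS pr (g n)) (\<Union>n\<in>{2..}. algS pr (g n))"
| "f 1 = 1 \<Longrightarrow> (\<And>n. n \<ge> 1 \<Longrightarrow> interp pr (sect pr f n) (sect pr g n) (P n) (S n))
     \<Longrightarrow> interp pr f g (\<Inter>n\<in>{1..}. S n) (\<Union>n\<in>{1..}. P n)"

definition interpPi :: "(nat \<Rightarrow> nat \<Rightarrow> nat) \<Rightarrow> (nat \<Rightarrow> nat) \<Rightarrow> (nat \<Rightarrow> nat) \<Rightarrow> (nat \<Rightarrow> nat) set" where
  "interpPi pr f g = fst (THE p. interp pr f g (fst p) (snd p))"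

definition interpSig :: "(nat \<Rightarrow> nat \<Rightarrow> nat) \<Rightarrow> (nat \<Rightarrow> nat) \<Rightarrow> (nat \<Rightarrow> nat) \<Rightarrow> (nat \<Rightarrow> nat) set" where
  "interpSig pr f g = snd (THE p. interp pr f g (fst p) (snd p))"

definition UPi :: "(nat \<Rightarrow> nat \<Rightarrow> nat) \<Rightarrow> (nat \<Rightarrow> nat) \<Rightarrow> (nat \<Rightarrow> nat) set" where
  "UPi pr f = {h \<in> BS. sect pr h 1 \<in> interpPi pr f (sect pr h 2)}"

definition USig :: "(nat \<Rightarrow> nat \<Rightarrow> nat) \<Rightarrow> (nat \<Rightarrow> nat) \<Rightarrow> (nat \<Rightarrow> nat) set" where
  "USig pr f = {h \<in> BS. sect pr h 1 \<in> interpSig pr f (sect pr h 2)}"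

end

theory Submission
  imports Defs "HOL-Library.Countable_Set"
begin

(* The statement is generalised from the coordinates h^[1], h^[2] to arbitrary reindexings
   h o s, h o r with s, r in BS, and proved by induction on the stump f.  At a leaf,
   h o s lies in [[h o r]]^Pi_f iff for all n >= 2 and all k >= 1, h(r n) = k implies
   h o s in [[k]]^A; each such condition is a set of the algebra A, because precomposition
   with s maps the literal B^m_n to B^m_(s n).  At an inner node the n-th section of h o r is
   h o r^[n], again a reindexing, so the induction hypothesis applies to every section. *)

lemma Alg_empty: "{} \<in> Alg"
  unfolding Alg_def by (rule CollectI, rule exI[of _ "{}"]) auto

lemma Alg_BS: "BS \<in> Alg"
  unfolding Alg_def by (rule CollectI, rule exI[of _ "{BS}"]) (auto intro!: exI[of _ "{}"])

lemma Alg_Un: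
  assumes "A \<in> Alg" "B \<in> Alg"
  shows "A \<union> B \<in> Alg"
proof -
  let ?cap = "\<lambda>C. \<exists>G. finite G \<and> G \<subseteq> lits \<and> C = BS \<inter> \<Inter>G"
  obtain F1 F2 where F: "A = \<Union>F1" "finite F1" "\<forall>C\<in>F1. ?cap C"
    "B = \<Union>F2" "finite F2" "\<forall>C\<in>F2. ?cap C"
    using assms unfolding Alg_def by blast
  then show ?thesis
    unfolding Alg_def by (intro CollectI exI[of _ "F1 \<union> F2"]) auto
qed

lemma Alg_Int:
  assumes "A \<in> Alg" "B \<in> Alg"
  shows "A \<inter> B \<in> Alg"
proof -
  let ?cap = "\<lambda>C. \<exists>G. finite G \<and> G \<subseteq> lits \<and> C = BS \<inter> \<Inter>G"
  obtain F1 F2 where F: "A = \<Union>F1" "finite F1" "\<forall>C\<in>F1. ?cap C"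
    "B = \<Union>F2" "finite F2" "\<forall>C\<in>F2. ?cap C"
    using assms unfolding Alg_def by blast
  let ?F = "(\<lambda>(C, D). C \<inter> D) ` (F1 \<times> F2)"
  have "\<forall>E\<in>?F. ?cap E"
  proof
    fix E assume "E \<in> ?F"
    then obtain C D where CD: "C \<in> F1" "D \<in> F2" and E: "E = C \<inter> D" by blast
    obtain G1 where "finite G1" "G1 \<subseteq> lits" "C = BS \<inter> \<Inter>G1"
      using bspec[OF F(3) CD(1)] by blast
    moreover obtain G2 where "finite G2" "G2 \<subseteq> lits" "D = BS \<inter> \<Inter>G2"
      using bspec[OF F(6) CD(2)] by blast
    ultimately show "?cap E" unfolding E by (intro exI[of _ "G1 \<union> G2"]) auto
  qed
  moreover have "A \<inter> B = \<Union>?F" unfolding F(1,4) by blast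
  moreover have "finite ?F" using F by simp
  ultimately show ?thesis unfolding Alg_def by (intro CollectI exI[of _ ?F]) simp
qed

lemma Alg_finite_Union: "finite F \<Longrightarrow> F \<subseteq> Alg \<Longrightarrow> \<Union>F \<in> Alg"
  by (induction F rule: finite_induct) (auto intro: Alg_Un Alg_empty)

lemma Alg_finite_Inter: "finite G \<Longrightarrow> G \<subseteq> Alg \<Longrightarrow> BS \<inter> \<Inter>G \<in> Alg"
  by (induction G rule: finite_induct) (auto simp: Int_left_commute intro: Alg_Int Alg_BS)

lemma Bset_subset_BS: "Bset m n \<subseteq> BS"
  unfolding Bset_def by blast

lemma lits_in_Alg:
  assumes "L \<in> lits"
  shows "L \<in> Alg"
proof -
  have "L = \<Union>{BS \<inter> \<Inter>{L}}"
    using assms Bset_subset_BS unfolding lits_def by auto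
  then show ?thesis
    unfolding Alg_def using assms by blast
qed

(* Degenerate parameters m = 0 or n = 0 must be covered: decode is a definite description,
   so litS may produce B^m_n for arbitrary m, n when k is not a valid code. *)
lemma Bset_trivial: "\<not> (m \<ge> 1 \<and> n \<ge> 1) \<Longrightarrow> Bset m n = {} \<or> Bset m n = BS"
  unfolding Bset_def BS_def by (cases n) auto

lemma Bset_in_Alg: "Bset m n \<in> Alg"
proof (cases "m \<ge> 1 \<and> n \<ge> 1")
  case True
  then show ?thesis by (intro lits_in_Alg) (auto simp: lits_def)
next
  case False
  then show ?thesis using Bset_trivial Alg_empty Alg_BS by metis
qed

lemma Diff_Bset_in_Alg: "BS - Bset m n \<in> Alg"
proof (cases "m \<ge> 1 \<and> n \<ge> 1")
  case True
  then show ?thesis by (intro lits_in_Alg) (auto simp: lits_def)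
next
  case False
  then show ?thesis using Bset_trivial[of m n] Alg_empty Alg_BS by auto
qed

lemma litS_in_Alg: "BS \<inter> litS pr k \<in> Alg"
  unfolding litS_def
  by (auto split: list.split simp: Int_absorb1 Bset_subset_BS Alg_empty Bset_in_Alg Diff_Bset_in_Alg)

lemma algS_in_Alg: "algS pr k \<in> Alg"
proof -
  have "capS pr a = BS \<inter> \<Inter>((\<lambda>b. BS \<inter> litS pr b) ` set (decode pr a))" for a
    unfolding capS_def by auto
  moreover have "BS \<inter> \<Inter>((\<lambda>b. BS \<inter> litS pr b) ` set (decode pr a)) \<in> Alg" for a
    by (rule Alg_finite_Inter) (auto intro: litS_in_Alg)
  ultimately have "capS pr a \<in> Alg" for a
    by simp
  then show ?thesis
    unfolding algS_def by (intro Alg_finite_Union) auto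
qed

definition precomp :: "(nat \<Rightarrow> nat) \<Rightarrow> (nat \<Rightarrow> nat) set \<Rightarrow> (nat \<Rightarrow> nat) set" where
  "precomp s A = {h \<in> BS. h \<circ> s \<in> A}"

lemma comp_in_BS: "h \<in> BS \<Longrightarrow> s \<in> BS \<Longrightarrow> h \<circ> s \<in> BS"
  unfolding BS_def by auto

lemma precomp_Bset: "s \<in> BS \<Longrightarrow> precomp s (Bset m n) = Bset m (s n)"
  unfolding precomp_def Bset_def using comp_in_BS by auto

lemma precomp_Diff_Bset: "s \<in> BS \<Longrightarrow> precomp s (BS - Bset m n) = BS - Bset m (s n)"
  unfolding precomp_def Bset_def using comp_in_BS by auto

lemma precomp_in_Alg:
  assumes s: "s \<in> BS" and "A \<in> Alg"
  shows "precomp s A \<in> Alg"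
proof -
  obtain F where F: "A = \<Union>F" "finite F" "\<forall>C\<in>F. \<exists>G. finite G \<and> G \<subseteq> lits \<and> C = BS \<inter> \<Inter>G"
    using \<open>A \<in> Alg\<close> unfolding Alg_def by blast
  have lit: "precomp s L \<in> Alg" if "L \<in> lits" for L
    using that s unfolding lits_def
    by (auto simp: precomp_Bset precomp_Diff_Bset Bset_in_Alg Diff_Bset_in_Alg)
  have cap: "precomp s C \<in> Alg" if C: "C \<in> F" for C
  proof -
    obtain G where G: "finite G" "G \<subseteq> lits" "C = BS \<inter> \<Inter>G"
      using bspec[OF F(3) C] by blast
    have "precomp s C = BS \<inter> \<Inter>(precomp s ` G)"
      unfolding G(3) precomp_def using comp_in_BS[OF _ s] by auto
    moreover have "BS \<inter> \<Inter>(precomp s ` G) \<in> Alg"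
      using G lit by (intro Alg_finite_Inter) auto
    ultimately show ?thesis by simp
  qed
  have "precomp s A = \<Union>(precomp s ` F)"
    unfolding F(1) precomp_def by auto
  then show ?thesis
    using F(2) cap by (auto intro: Alg_finite_Union)
qed

lemma CountInter_iff: "A \<in> CountInter X \<longleftrightarrow> (\<exists>F. countable F \<and> F \<noteq> {} \<and> F \<subseteq> X \<and> A = \<Inter>F)"
proof
  assume "A \<in> CountInter X"
  then obtain S :: "nat \<Rightarrow> (nat \<Rightarrow> nat) set" where "\<forall>i. S i \<in> X" "A = \<Inter>(range S)"
    unfolding CountInter_def by blast
  then show "\<exists>F. countable F \<and> F \<noteq> {} \<and> F \<subseteq> X \<and> A = \<Inter>F"
    by (intro exI[of _ "range S"]) (auto intro: countable_image)
next
  assume "\<exists>F. countable F \<and> F \<noteq> {} \<and> F \<subseteq> X \<and> A = \<Inter>F"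
  then obtain F where F: "countable F" "F \<noteq> {}" "F \<subseteq> X" "A = \<Inter>F"
    by blast
  then show "A \<in> CountInter X"
    unfolding CountInter_def using from_nat_into[OF F(2)]
    by (intro CollectI exI[of _ "from_nat_into F"]) auto
qed

lemma CountUnion_iff: "A \<in> CountUnion X \<longleftrightarrow> (\<exists>F. countable F \<and> F \<noteq> {} \<and> F \<subseteq> X \<and> A = \<Union>F)"
proof
  assume "A \<in> CountUnion X"
  then obtain S :: "nat \<Rightarrow> (nat \<Rightarrow> nat) set" where "\<forall>i. S i \<in> X" "A = \<Union>(range S)"
    unfolding CountUnion_def by blast
  then show "\<exists>F. countable F \<and> F \<noteq> {} \<and> F \<subseteq> X \<and> A = \<Union>F"
    by (intro exI[of _ "range S"]) (auto intro: countable_image)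
next
  assume "\<exists>F. countable F \<and> F \<noteq> {} \<and> F \<subseteq> X \<and> A = \<Union>F"
  then obtain F where F: "countable F" "F \<noteq> {}" "F \<subseteq> X" "A = \<Union>F"
    by blast
  then show "A \<in> CountUnion X"
    unfolding CountUnion_def using from_nat_into[OF F(2)]
    by (intro CollectI exI[of _ "from_nat_into F"]) auto
qed

lemma in_CountInter: "A \<in> X \<Longrightarrow> A \<in> CountInter X"
  unfolding CountInter_iff by (intro exI[of _ "{A}"]) auto

lemma in_CountUnion: "A \<in> X \<Longrightarrow> A \<in> CountUnion X"
  unfolding CountUnion_iff by (intro exI[of _ "{A}"]) auto

lemma CountInter_INT:
  assumes "countable I" "I \<noteq> {}" "\<And>i. i \<in> I \<Longrightarrow> A i \<in> CountInter X"
  shows "(\<Inter>i\<in>I. A i) \<in> CountInter X"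
proof -
  obtain F where F: "\<And>i. i \<in> I \<Longrightarrow> countable (F i) \<and> F i \<noteq> {} \<and> F i \<subseteq> X \<and> A i = \<Inter>(F i)"
    using assms(3) unfolding CountInter_iff by metis
  then have "(\<Inter>i\<in>I. A i) = \<Inter>(\<Union>i\<in>I. F i)"
    by auto
  moreover have "countable (\<Union>i\<in>I. F i)" "(\<Union>i\<in>I. F i) \<noteq> {}" "(\<Union>i\<in>I. F i) \<subseteq> X"
    using assms(1,2) F by auto
  ultimately show ?thesis
    unfolding CountInter_iff by blast
qed

lemma CountUnion_UN:
  assumes "countable I" "I \<noteq> {}" "\<And>i. i \<in> I \<Longrightarrow> A i \<in> CountUnion X"
  shows "(\<Union>i\<in>I. A i) \<in> CountUnion X"
proof -
  obtain F where F: "\<And>i. i \<in> I \<Longrightarrow> countable (F i) \<and> F i \<noteq> {} \<and> F i \<subseteq> X \<and> A i = \<Union>(F i)"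
    using assms(3) unfolding CountUnion_iff by metis
  then have "(\<Union>i\<in>I. A i) = \<Union>(\<Union>i\<in>I. F i)"
    by auto
  moreover have "countable (\<Union>i\<in>I. F i)" "(\<Union>i\<in>I. F i) \<noteq> {}" "(\<Union>i\<in>I. F i) \<subseteq> X"
    using assms(1,2) F by auto
  ultimately show ?thesis
    unfolding CountUnion_iff by blast
qed

lemma Stp_sect: "Stp pr f \<Longrightarrow> f 1 = 1 \<Longrightarrow> n \<ge> 1 \<Longrightarrow> Stp pr (sect pr f n)"
  by (auto elim: Stp.cases)

lemma stp_ord_unique: "stp_ord pr f a \<Longrightarrow> stp_ord pr f b \<Longrightarrow> a = b"
proof (induction arbitrary: b rule: stp_ord.induct)
  case (1 f)
  then show ?case by (auto elim: stp_ord.cases)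
next
  case (2 f g)
  from 2(4) show ?case
  proof cases
    case 1
    then show ?thesis using 2 by simp
  next
    case (2 g')
    then show ?thesis using "2.IH" by auto
  qed
qed

lemma stp_ord_exists: "Stp pr f \<Longrightarrow> \<exists>a. stp_ord pr f a"
proof (induction rule: Stp.induct)
  case (1 f)
  then show ?case by (blast intro: stp_ord.intros)
next
  case (2 f)
  then obtain g where "\<And>n. n \<ge> 1 \<Longrightarrow> stp_ord pr (sect pr f n) (g n)"
    by metis
  then show ?case
    using 2(2) by (blast intro: stp_ord.intros)
qed

lemma alpha_eqI: "stp_ord pr f a \<Longrightarrow> alpha pr f = a"
  unfolding alpha_def using stp_ord_unique by blast

lemma alpha_leaf: "f 1 \<noteq> 1 \<Longrightarrow> alpha pr f = BZero"
  by (rule alpha_eqI) (rule stp_ord.intros)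

lemma alpha_node:
  assumes "Stp pr f" "f 1 = 1"
  shows "alpha pr f = BLim (\<lambda>n. BSuc (alpha pr (sect pr f (Suc n))))"
proof (rule alpha_eqI)
  have "stp_ord pr (sect pr f n) (alpha pr (sect pr f n))" if "n \<ge> 1" for n
    using Stp_sect[OF assms that] stp_ord_exists alpha_eqI by metis
  then show "stp_ord pr f (BLim (\<lambda>n. BSuc (alpha pr (sect pr f (Suc n)))))"
    by (rule stp_ord.intros(2)[of f pr "\<lambda>n. alpha pr (sect pr f n)", OF assms(2)])
qed

lemma CountUnion_PiA_alpha_sect:
  assumes "Stp pr f" "f 1 = 1" "n \<ge> 1"
  shows "CountUnion (PiA (alpha pr (sect pr f n))) \<subseteq> SigA (alpha pr f)"
proof -
  obtain k where "n = Suc k" using assms(3) by (cases n) auto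
  then show ?thesis
    unfolding alpha_node[OF assms(1,2)] SigA_def PiA_def by auto
qed

lemma CountInter_SigA_alpha_sect:
  assumes "Stp pr f" "f 1 = 1" "n \<ge> 1"
  shows "CountInter (SigA (alpha pr (sect pr f n))) \<subseteq> PiA (alpha pr f)"
proof -
  obtain k where "n = Suc k" using assms(3) by (cases n) auto
  then show ?thesis
    unfolding alpha_node[OF assms(1,2)] SigA_def PiA_def by auto
qed

lemma interp_unique: "interp pr f g P S \<Longrightarrow> interp pr f g P' S' \<Longrightarrow> P = P' \<and> S = S'"
proof (induction arbitrary: P' S' rule: interp.induct)
  case (1 f g)
  then show ?case by (auto elim: interp.cases)
next
  case (2 f g P S)
  from 2(4) show ?case
  proof cases
    case 1
    then show ?thesis using 2 by simp
  next
    case (2 P2 S2)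
    then have "\<And>n. n \<ge> 1 \<Longrightarrow> P n = P2 n \<and> S n = S2 n" using "2.IH" by blast
    then show ?thesis using 2 by (auto simp: atLeast_def)
  qed
qed

lemma interp_exists: "Stp pr f \<Longrightarrow> \<exists>P S. interp pr f g P S"
proof (induction arbitrary: g rule: Stp.induct)
  case (1 f)
  then show ?case by (blast intro: interp.intros)
next
  case (2 f)
  then have "\<forall>n. \<exists>p. n \<ge> 1 \<longrightarrow> interp pr (sect pr f n) (sect pr g n) (fst p) (snd p)"
    by auto
  then obtain p where "\<And>n. n \<ge> 1 \<Longrightarrow> interp pr (sect pr f n) (sect pr g n) (fst (p n)) (snd (p n))"
    by metis
  then show ?case
    by (blast intro: interp.intros(2)[of f pr g "\<lambda>n. fst (p n)" "\<lambda>n. snd (p n)", OF 2(2)])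
qed

lemma interp_eqI: "interp pr f g P S \<Longrightarrow> interpPi pr f g = P \<and> interpSig pr f g = S"
proof -
  assume a: "interp pr f g P S"
  have "(THE p. interp pr f g (fst p) (snd p)) = (P, S)"
    by (rule the_equality) (simp add: a, metis a interp_unique prod.collapse)
  then show ?thesis unfolding interpPi_def interpSig_def by simp
qed

lemma interp_leaf:
  assumes "f 1 \<noteq> 1"
  shows "interpPi pr f g = (\<Inter>n\<in>{2..}. algS pr (g n))"
    and "interpSig pr f g = (\<Union>n\<in>{2..}. algS pr (g n))"
  using interp_eqI[OF interp.intros(1)[of f pr g, OF assms]] by auto

lemma interp_node:
  assumes "Stp pr f" "f 1 = 1"
  shows "interpPi pr f g = (\<Inter>n\<in>{1..}. interpSig pr (sect pr f n) (sect pr g n))"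
    and "interpSig pr f g = (\<Union>n\<in>{1..}. interpPi pr (sect pr f n) (sect pr g n))"
proof -
  have "interp pr (sect pr f n) (sect pr g n)
          (interpPi pr (sect pr f n) (sect pr g n)) (interpSig pr (sect pr f n) (sect pr g n))"
    if "n \<ge> 1" for n
    using interp_exists[OF Stp_sect[OF assms that]] interp_eqI by metis
  then have "interp pr f g (\<Inter>n\<in>{1..}. interpSig pr (sect pr f n) (sect pr g n))
                          (\<Union>n\<in>{1..}. interpPi pr (sect pr f n) (sect pr g n))"
    by (rule interp.intros(2)[of f pr g "\<lambda>n. interpPi pr (sect pr f n) (sect pr g n)"
        "\<lambda>n. interpSig pr (sect pr f n) (sect pr g n)", OF assms(2)])
  then show "interpPi pr f g = (\<Inter>n\<in>{1..}. interpSig pr (sect pr f n) (sect pr g n))"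
    and "interpSig pr f g = (\<Union>n\<in>{1..}. interpPi pr (sect pr f n) (sect pr g n))"
    by (simp_all add: interp_eqI)
qed

lemma pairing_pos: "pairing_bij pr \<Longrightarrow> a \<ge> 1 \<Longrightarrow> b \<ge> 1 \<Longrightarrow> pr a b \<ge> 1"
  unfolding pairing_bij_def using bij_betw_apply[of "\<lambda>(a, b). pr a b" "{1..} \<times> {1..}" "{2..}" "(a, b)"] by auto

lemma sect_in_BS: "pairing_bij pr \<Longrightarrow> r \<in> BS \<Longrightarrow> n \<ge> 1 \<Longrightarrow> sect pr r n \<in> BS"
  unfolding sect_def BS_def using pairing_pos by auto

lemma sect_comp: "h \<in> BS \<Longrightarrow> sect pr (h \<circ> r) n = h \<circ> sect pr r n"
  unfolding sect_def BS_def by auto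

definition UPi_comp :: "(nat \<Rightarrow> nat \<Rightarrow> nat) \<Rightarrow> (nat \<Rightarrow> nat) \<Rightarrow> (nat \<Rightarrow> nat) \<Rightarrow> (nat \<Rightarrow> nat)
    \<Rightarrow> (nat \<Rightarrow> nat) set" where
  "UPi_comp pr f s r = {h \<in> BS. h \<circ> s \<in> interpPi pr f (h \<circ> r)}"

definition USig_comp :: "(nat \<Rightarrow> nat \<Rightarrow> nat) \<Rightarrow> (nat \<Rightarrow> nat) \<Rightarrow> (nat \<Rightarrow> nat) \<Rightarrow> (nat \<Rightarrow> nat)
    \<Rightarrow> (nat \<Rightarrow> nat) set" where
  "USig_comp pr f s r = {h \<in> BS. h \<circ> s \<in> interpSig pr f (h \<circ> r)}"

lemma UPi_comp_leaf:
  assumes f: "f 1 \<noteq> 1" and r: "r \<in> BS"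
  shows "UPi_comp pr f s r = (\<Inter>n\<in>{2..}. \<Inter>k\<in>{1..}. (BS - Bset k (r n)) \<union> precomp s (algS pr k))"
    (is "_ = ?rhs")
proof (intro equalityI subsetI)
  fix h assume "h \<in> UPi_comp pr f s r"
  then show "h \<in> ?rhs"
    unfolding UPi_comp_def interp_leaf[where f = f, OF f] precomp_def Bset_def by auto
next
  fix h assume h: "h \<in> ?rhs"
  then have "h \<in> (BS - Bset 1 (r 2)) \<union> precomp s (algS pr 1)"
    by blast
  then have BS: "h \<in> BS"
    unfolding precomp_def by blast
  have "h \<circ> s \<in> algS pr (h (r n))" if "n \<ge> 2" for n
  proof -
    have "h (r n) \<ge> 1"
      using BS r that unfolding BS_def by simp
    with h that have "h \<in> (BS - Bset (h (r n)) (r n)) \<union> precomp s (algS pr (h (r n)))"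
      by blast
    then show ?thesis
      unfolding precomp_def Bset_def by blast
  qed
  with BS show "h \<in> UPi_comp pr f s r"
    unfolding UPi_comp_def interp_leaf[where f = f, OF f] by auto
qed

lemma USig_comp_leaf:
  assumes f: "f 1 \<noteq> 1" and r: "r \<in> BS"
  shows "USig_comp pr f s r = (\<Union>n\<in>{2..}. \<Union>k\<in>{1..}. Bset k (r n) \<inter> precomp s (algS pr k))"
    (is "_ = ?rhs")
proof (intro equalityI subsetI)
  fix h assume "h \<in> USig_comp pr f s r"
  then obtain n where h: "h \<in> BS" "n \<ge> 2" "h \<circ> s \<in> algS pr (h (r n))"
    unfolding USig_comp_def interp_leaf[where f = f, OF f] by auto
  then have "h (r n) \<ge> 1"
    using r unfolding BS_def by simp
  with h show "h \<in> ?rhs"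
    unfolding precomp_def Bset_def by auto
next
  fix h assume "h \<in> ?rhs"
  then show "h \<in> USig_comp pr f s r"
    unfolding USig_comp_def interp_leaf[where f = f, OF f] precomp_def Bset_def by auto
qed

lemma UPi_comp_node:
  assumes "Stp pr f" "f 1 = 1"
  shows "UPi_comp pr f s r = (\<Inter>n\<in>{1..}. USig_comp pr (sect pr f n) s (sect pr r n))"
  unfolding UPi_comp_def USig_comp_def interp_node[OF assms] by (auto simp: sect_comp)

lemma USig_comp_node:
  assumes "Stp pr f" "f 1 = 1"
  shows "USig_comp pr f s r = (\<Union>n\<in>{1..}. UPi_comp pr (sect pr f n) s (sect pr r n))"
  unfolding UPi_comp_def USig_comp_def interp_node[OF assms] by (auto simp: sect_comp)

lemma UPi_USig_comp_complexity:
  assumes pr: "pairing_bij pr" and "Stp pr f" and s: "s \<in> BS" and "r \<in> BS"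
  shows "UPi_comp pr f s r \<in> CountInter (SigA (alpha pr f))
    \<and> USig_comp pr f s r \<in> CountUnion (PiA (alpha pr f))"
  using assms(2,4)
proof (induction arbitrary: r rule: Stp.induct)
  case (1 f)
  have "UPi_comp pr f s r \<in> CountInter Alg" "USig_comp pr f s r \<in> CountUnion Alg"
    unfolding UPi_comp_leaf[where f = f, OF 1(2,3)] USig_comp_leaf[where f = f, OF 1(2,3)]
    by (intro CountInter_INT CountUnion_UN in_CountInter in_CountUnion countableI_type
          Alg_Un Alg_Int Bset_in_Alg Diff_Bset_in_Alg precomp_in_Alg[OF s] algS_in_Alg; force)+
  then show ?case
    by (simp add: alpha_leaf[where f = f, OF 1(2)] SigA_def PiA_def)
next
  case (2 f)
  then have stp: "Stp pr f"
    by (blast intro: Stp.intros)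
  have "USig_comp pr (sect pr f n) s (sect pr r n) \<in> SigA (alpha pr f)"
    and "UPi_comp pr (sect pr f n) s (sect pr r n) \<in> PiA (alpha pr f)" if "n \<ge> 1" for n
    using 2(4)[OF that sect_in_BS[OF pr 2(5) that]] CountUnion_PiA_alpha_sect[OF stp 2(2) that]
      CountInter_SigA_alpha_sect[OF stp 2(2) that] by auto
  then show ?case
    unfolding UPi_comp_node[OF stp 2(2)] USig_comp_node[OF stp 2(2)]
    by (intro conjI CountInter_INT CountUnion_UN in_CountInter in_CountUnion countableI_type) auto
qed

theorem lemma5p24:
  fixes pr :: "nat \<Rightarrow> nat \<Rightarrow> nat" and f :: "nat \<Rightarrow> nat"
  assumes "pairing_bij pr"
    and "Stp pr f"
  shows "UPi pr f \<in> CountInter (SigA (alpha pr f)) \<and> USig pr f \<in> CountUnion (PiA (alpha pr f))"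
proof -
  have "id \<in> BS"
    unfolding BS_def by simp
  then have coords: "sect pr id 1 \<in> BS" "sect pr id 2 \<in> BS"
    using sect_in_BS[OF assms(1)] by auto
  have "UPi pr f = UPi_comp pr f (sect pr id 1) (sect pr id 2)"
    and "USig pr f = USig_comp pr f (sect pr id 1) (sect pr id 2)"
    unfolding UPi_def USig_def UPi_comp_def USig_comp_def using sect_comp[of _ pr id] by auto
  then show ?thesis
    using UPi_USig_comp_complexity[OF assms coords] by simp
qed

end
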